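(* Convolution $(\sigma,\tau)\mapsto\sigma*\tau$ is a Baire class 1 map from $\mathcal T\times\mathcal T$ to $\mathcal T$.
   Context: Standing setting: $(X,\|\cdot\|)$ is a separable infinite-dimensional Banach space and $d$ is a translation-invariant stable pseudometric on $X$ such that $\mathrm{Id}\colon(X,\|\cdot\|)\to(X,d)$ is a coarse equivalence. $\Delta$ is a countable $\|\cdot\|$-dense $\mathbb Q$-linear subspace of $X$; for $x\in\Delta$, $\bar x(\lambda,y)=d(\lambda x,y)$. $\mathcal T$ is the closure of $\{\bar x:x\in\Delta\}$ in $\mathbb R^{\mathbb Q\times\Delta}$ (pointwise topology, metrizable). For $\sigma,\tau\in\mathcal T$ with defining sequences $(x_n),(y_m)$ (i.e. $\bar x_n\to\sigma$, $\bar y_m\to\tau$), $\sigma*\tau=\lim_n\lim_m\overline{x_n+y_m}$. A map is Baire class 1 if preimages of open sets are $F_\sigma$. *)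

theory Defs
  imports "HOL-Analysis.Analysis"
begin

definition separable_space :: "'a::real_normed_vector itself \<Rightarrow> bool" where
  "separable_space _ \<longleftrightarrow> (\<exists>D::'a set. countable D \<and> closure D = UNIV)"

definition infinite_dimensional :: "'a::real_normed_vector itself \<Rightarrow> bool" where
  "infinite_dimensional _ \<longleftrightarrow> (\<forall>S::'a set. finite S \<longrightarrow> span S \<noteq> UNIV)"

definition pseudometric :: "('a \<Rightarrow> 'a \<Rightarrow> real) \<Rightarrow> bool" where
  "pseudometric d \<longleftrightarrow> (\<forall>x. d x x = 0) \<and> (\<forall>x y. d x y \<ge> 0) \<and> (\<forall>x y. d x y = d y x)
     \<and> (\<forall>x y z. d x z \<le> d x y + d y z)"

definition translation_invariant :: "('a::ab_group_add \<Rightarrow> 'a \<Rightarrow> real) \<Rightarrow> bool" where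
  "translation_invariant d \<longleftrightarrow> (\<forall>x y z. d (x + z) (y + z) = d x y)"

definition stable_pm :: "('a::zero \<Rightarrow> 'a \<Rightarrow> real) \<Rightarrow> bool" where
  "stable_pm d \<longleftrightarrow> (\<forall>(x::nat \<Rightarrow> 'a) (y::nat \<Rightarrow> 'a) (f::nat \<Rightarrow> real) (g::nat \<Rightarrow> real) a b.
      (\<exists>M. \<forall>n. d (x n) 0 \<le> M \<and> d (y n) 0 \<le> M) \<and>
      (\<forall>n. (\<lambda>m. d (x n) (y m)) \<longlonglongrightarrow> f n) \<and> f \<longlonglongrightarrow> a \<and>
      (\<forall>m. (\<lambda>n. d (x n) (y m)) \<longlonglongrightarrow> g m) \<and> g \<longlonglongrightarrow> b
      \<longrightarrow> a = b)"

text \<open>The identity (X,norm) \<rightarrow> (X,d) is a coarse equivalence (it is a bijection, so this means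
  it is bornologous and expanding / coarse embedding).\<close>
definition id_coarse_equiv :: "('a::real_normed_vector \<Rightarrow> 'a \<Rightarrow> real) \<Rightarrow> bool" where
  "id_coarse_equiv d \<longleftrightarrow>
     (\<forall>R. \<exists>S. \<forall>x y. norm (x - y) \<le> R \<longrightarrow> d x y \<le> S) \<and>
     (\<forall>S. \<exists>R. \<forall>x y. d x y \<le> S \<longrightarrow> norm (x - y) \<le> R)"

definition rat_linear_subspace :: "'a::real_vector set \<Rightarrow> bool" where
  "rat_linear_subspace D \<longleftrightarrow> 0 \<in> D \<and> (\<forall>x\<in>D. \<forall>y\<in>D. x + y \<in> D)
     \<and> (\<forall>q::rat. \<forall>x\<in>D. real_of_rat q *\<^sub>R x \<in> D)"

text \<open>The ambient space R^(Q x Delta) with the product (pointwise) topology; its points are the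
  extensional functions on Q x Delta.\<close>
definition ambient :: "'a set \<Rightarrow> (rat \<times> 'a \<Rightarrow> real) topology" where
  "ambient D = product_topology (\<lambda>_. euclideanreal) (UNIV \<times> D)"

definition bar :: "('a::real_vector \<Rightarrow> 'a \<Rightarrow> real) \<Rightarrow> 'a set \<Rightarrow> 'a \<Rightarrow> (rat \<times> 'a \<Rightarrow> real)" where
  "bar d D x = restrict (\<lambda>(q, y). d (real_of_rat q *\<^sub>R x) y) (UNIV \<times> D)"

definition Tsp :: "('a::real_vector \<Rightarrow> 'a \<Rightarrow> real) \<Rightarrow> 'a set \<Rightarrow> (rat \<times> 'a \<Rightarrow> real) set" where
  "Tsp d D = (ambient D) closure_of (bar d D ` D)"

definition defining_seq :: "('a::real_vector \<Rightarrow> 'a \<Rightarrow> real) \<Rightarrow> 'a set \<Rightarrow> (nat \<Rightarrow> 'a) \<Rightarrow> (rat \<times> 'a \<Rightarrow> real) \<Rightarrow> bool" where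
  "defining_seq d D x \<sigma> \<longleftrightarrow> (\<forall>n. x n \<in> D) \<and> limitin (ambient D) (\<lambda>n. bar d D (x n)) \<sigma> sequentially"

definition conv :: "('a::real_vector \<Rightarrow> 'a \<Rightarrow> real) \<Rightarrow> 'a set \<Rightarrow> (rat \<times> 'a \<Rightarrow> real) \<Rightarrow> (rat \<times> 'a \<Rightarrow> real) \<Rightarrow> (rat \<times> 'a \<Rightarrow> real)" where
  "conv d D \<sigma> \<tau> = (THE \<rho>. \<forall>x y. defining_seq d D x \<sigma> \<and> defining_seq d D y \<tau> \<longrightarrow>
      (\<exists>g. (\<forall>n. limitin (ambient D) (\<lambda>m. bar d D (x n + y m)) (g n) sequentially)
           \<and> limitin (ambient D) g \<rho> sequentially))"

definition baire1_map :: "'a topology \<Rightarrow> 'b topology \<Rightarrow> ('a \<Rightarrow> 'b) \<Rightarrow> bool" where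
  "baire1_map X Y f \<longleftrightarrow> f \<in> topspace X \<rightarrow> topspace Y \<and>
     (\<forall>U. openin Y U \<longrightarrow> fsigma_in X {x \<in> topspace X. f x \<in> U})"

end

theory Submission
  imports Defs
begin

text \<open>For a defining sequence \<open>(x\<^sub>n)\<close> of \<open>\<sigma>\<close>, \<open>bar (x\<^sub>n + y\<^sub>m)\<close> is the translate of
  \<open>bar y\<^sub>m\<close> by \<open>x\<^sub>n\<close>, so letting \<open>m \<rightarrow> \<infinity>\<close> gives \<open>\<sigma> * \<tau> = lim\<^sub>n \<tau>\<^sub>x\<^sub>n\<close>, where
  \<open>\<tau>\<^sub>x (q, w) = \<tau> (q, w - q x)\<close>. Stability makes the two iterated limits of
  \<open>d (q x\<^sub>n, w - q y\<^sub>m)\<close> agree, so this limit exists and does not depend on the defining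
  sequence. Consequently \<open>(\<sigma> * \<tau>)(q, w)\<close> lies in an open interval iff there are a rational box
  \<open>V\<close> around \<open>\<sigma>\<close> and rationals \<open>a, b\<close> strictly inside the interval with \<open>\<tau>\<^sub>v (q, w) \<in> [a, b]\<close>
  for all \<open>v \<in> \<Delta>\<close> with \<open>bar v \<in> V\<close>. The preimage of the interval is thus a countable union of
  products of an open set (an \<open>F\<^sub>\<sigma>\<close> set, the ambient space being metrizable) with a closed
  set, and a map into the countable power \<open>\<real>\<^bsup>\<rat> \<times> \<Delta>\<^esup>\<close> whose coordinates are of Baire class 1
  is itself of Baire class 1.\<close>

section \<open>Iterated limits for a stable pseudometric\<close>

lemma LIMSEQ_if_subseq_limits:
  fixes f :: "nat \<Rightarrow> real"
  assumes bounded: "bounded (range f)"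
    and subseq_lim: "\<And>r l. strict_mono r \<Longrightarrow> (f \<circ> r) \<longlonglongrightarrow> l \<Longrightarrow> l = L"
  shows "f \<longlonglongrightarrow> L"
proof (rule ccontr)
  assume "\<not> f \<longlonglongrightarrow> L"
  then obtain \<epsilon> where "\<epsilon> > 0" and "\<forall>N. \<exists>n\<ge>N. \<epsilon> \<le> dist (f n) L"
    unfolding LIMSEQ_def by (meson not_less)
  then have "infinite {n. \<epsilon> \<le> dist (f n) L}"
    unfolding infinite_nat_iff_unbounded_le by blast
  from infinite_enumerate[OF this]
  obtain r :: "nat \<Rightarrow> nat" where r: "strict_mono r" and far: "\<And>n. \<epsilon> \<le> dist (f (r n)) L"
    by auto
  have "bounded (range (f \<circ> r))"
    using bounded by (rule bounded_subset) auto
  from bounded_imp_convergent_subsequence[OF this]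
  obtain l and s :: "nat \<Rightarrow> nat" where s: "strict_mono s" and lim: "(f \<circ> r \<circ> s) \<longlonglongrightarrow> l"
    by blast
  have "l = L"
    using subseq_lim[OF strict_mono_o[OF r s]] lim by (simp add: o_assoc)
  moreover have "\<epsilon> \<le> dist l L"
    using far by (intro tendsto_lowerbound[OF tendsto_dist[OF lim tendsto_const]]) auto
  ultimately show False
    using \<open>\<epsilon> > 0\<close> by simp
qed

lemma LIMSEQ_bounded_above:
  fixes f :: "nat \<Rightarrow> real"
  assumes "f \<longlonglongrightarrow> l"
  shows "\<exists>K. \<forall>n. f n \<le> K"
proof -
  obtain K where "\<forall>n. norm (f n) \<le> K"
    using convergent_imp_Bseq[OF convergentI[OF assms]] by (auto elim: BseqE)
  then show ?thesis
    by (auto simp: abs_le_iff)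
qed

lemma pseudometric_le_origin:
  assumes "pseudometric d"
  shows "d x y \<le> d x 0 + d y 0" and "0 \<le> d x y"
proof -
  have "d x y \<le> d x 0 + d 0 y" "d 0 y = d y 0" "0 \<le> d x y"
    using assms unfolding pseudometric_def by blast+
  then show "d x y \<le> d x 0 + d y 0" and "0 \<le> d x y"
    by simp_all
qed

lemma stable_pmD:
  assumes "stable_pm d"
    and "\<And>n. d (x n) 0 \<le> M" "\<And>n. d (y n) 0 \<le> M"
    and "\<And>n. (\<lambda>m. d (x n) (y m)) \<longlonglongrightarrow> f n" "f \<longlonglongrightarrow> a"
    and "\<And>m. (\<lambda>n. d (x n) (y m)) \<longlonglongrightarrow> g m" "g \<longlonglongrightarrow> b"
  shows "a = b"
proof -
  have "(\<exists>M. \<forall>n. d (x n) 0 \<le> M \<and> d (y n) 0 \<le> M) \<and>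
      (\<forall>n. (\<lambda>m. d (x n) (y m)) \<longlonglongrightarrow> f n) \<and> f \<longlonglongrightarrow> a \<and>
      (\<forall>m. (\<lambda>n. d (x n) (y m)) \<longlonglongrightarrow> g m) \<and> g \<longlonglongrightarrow> b"
    using assms(2-) by blast
  with assms(1) show ?thesis
    unfolding stable_pm_def by blast
qed

text \<open>Stability only speaks about iterated limits that exist; boundedness and a compactness
  argument upgrade it to their existence.\<close>
lemma stable_iterated_limits:
  assumes pm: "pseudometric d" and st: "stable_pm d"
    and bound: "\<And>n. d (x n) 0 \<le> M" "\<And>n. d (y n) 0 \<le> M"
    and rows: "\<And>n. (\<lambda>m. d (x n) (y m)) \<longlonglongrightarrow> f n"
    and cols: "\<And>m. (\<lambda>n. d (x n) (y m)) \<longlonglongrightarrow> g m"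
  shows "\<exists>L. f \<longlonglongrightarrow> L \<and> g \<longlonglongrightarrow> L"
proof -
  have entry_bound: "\<bar>d (x n) (y m)\<bar> \<le> 2 * M" for n m
    using pseudometric_le_origin[OF pm, of "x n" "y m"] bound[of n] bound(2)[of m] by linarith
  have "\<bar>f n\<bar> \<le> 2 * M" for n
    using entry_bound by (intro tendsto_upperbound[OF tendsto_rabs[OF rows]]) auto
  then have f_bounded: "bounded (range f)"
    by (intro boundedI[of _ "2 * M"]) auto
  have "\<bar>g m\<bar> \<le> 2 * M" for m
    using entry_bound by (intro tendsto_upperbound[OF tendsto_rabs[OF cols]]) auto
  then have g_bounded: "bounded (range g)"
    by (intro boundedI[of _ "2 * M"]) auto
  have subseq_limits_eq: "\<alpha> = \<beta>"
    if r: "strict_mono r" and s: "strict_mono s" and "(f \<circ> r) \<longlonglongrightarrow> \<alpha>" and "(g \<circ> s) \<longlonglongrightarrow> \<beta>"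
    for r s \<alpha> \<beta>
  proof -
    have "(\<lambda>m. d ((x \<circ> r) n) ((y \<circ> s) m)) \<longlonglongrightarrow> (f \<circ> r) n" for n
      using LIMSEQ_subseq_LIMSEQ[OF rows s] by (simp add: o_def)
    moreover have "(\<lambda>n. d ((x \<circ> r) n) ((y \<circ> s) m)) \<longlonglongrightarrow> (g \<circ> s) m" for m
      using LIMSEQ_subseq_LIMSEQ[OF cols r] by (simp add: o_def)
    ultimately show ?thesis
      using stable_pmD[OF st, of "x \<circ> r" M "y \<circ> s" "f \<circ> r" \<alpha> "g \<circ> s" \<beta>] bound that(3,4) by simp
  qed
  obtain \<beta> and s :: "nat \<Rightarrow> nat" where s: "strict_mono s" and g_s: "(g \<circ> s) \<longlonglongrightarrow> \<beta>"
    using bounded_imp_convergent_subsequence[OF g_bounded] by blast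
  have f_lim: "f \<longlonglongrightarrow> \<beta>"
    using f_bounded subseq_limits_eq[OF _ s _ g_s] by (rule LIMSEQ_if_subseq_limits)
  have "g \<longlonglongrightarrow> \<beta>"
  proof (rule LIMSEQ_if_subseq_limits[OF g_bounded])
    fix r l assume "strict_mono r" "(g \<circ> r) \<longlonglongrightarrow> l"
    then show "l = \<beta>"
      using subseq_limits_eq[of id r \<beta> l] f_lim by (simp add: strict_mono_def)
  qed
  with f_lim show ?thesis
    by blast
qed

section \<open>Baire class 1 maps into countable powers of the reals\<close>

lemma fsigma_in_Times_closedin:
  assumes "fsigma_in X S" and "closedin Y C"
  shows "fsigma_in (prod_topology X Y) (S \<times> C)"
proof -
  obtain \<F> where \<F>: "countable \<F>" "\<And>K. K \<in> \<F> \<Longrightarrow> closedin X K" and S: "S = \<Union>\<F>"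
    using assms(1) unfolding fsigma_in_def union_of_def by auto
  have "S \<times> C = \<Union>((\<lambda>K. K \<times> C) ` \<F>)"
    unfolding S by blast
  moreover have "fsigma_in (prod_topology X Y) (\<Union>((\<lambda>K. K \<times> C) ` \<F>))"
  proof (rule fsigma_in_Union)
    fix T assume "T \<in> (\<lambda>K. K \<times> C) ` \<F>"
    then show "fsigma_in (prod_topology X Y) T"
      using \<F>(2) assms(2) by (auto simp: closedin_prod_Times_iff intro: closed_imp_fsigma_in)
  qed (use \<F>(1) in simp)
  ultimately show ?thesis
    by simp
qed

lemma baire1_map_into_subtopology:
  assumes "baire1_map X Y f" and "f \<in> topspace X \<rightarrow> S"
  shows "baire1_map X (subtopology Y S) f"
  unfolding baire1_map_def
proof (intro conjI allI impI)
  show "f \<in> topspace X \<rightarrow> topspace (subtopology Y S)"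
    using assms unfolding baire1_map_def by auto
  fix U assume "openin (subtopology Y S) U"
  then obtain W where W: "openin Y W" and U: "U = W \<inter> S"
    unfolding openin_subtopology by blast
  have "{x \<in> topspace X. f x \<in> U} = {x \<in> topspace X. f x \<in> W}"
    using assms(2) U by auto
  then show "fsigma_in X {x \<in> topspace X. f x \<in> U}"
    using assms(1) W unfolding baire1_map_def by simp
qed

lemma metrizable_space_powertop_real:
  "countable I \<Longrightarrow> metrizable_space (powertop_real I)"
  by (auto simp: metrizable_space_product_topology metrizable_space_euclidean
      intro: countable_subset[of _ I])

lemma metrizable_space_closure_of_sequentially:
  assumes "metrizable_space X" and "x \<in> X closure_of S"
  obtains \<sigma> where "range \<sigma> \<subseteq> S" and "limitin X \<sigma> x sequentially"
proof -
  obtain M m where M: "Metric_space M m" and X: "X = Metric_space.mtopology M m"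
    using assms(1) unfolding metrizable_space_def by blast
  interpret Metric_space M m
    by (fact M)
  obtain \<sigma> where "range \<sigma> \<subseteq> S \<inter> M" and "limitin mtopology \<sigma> x sequentially"
    using assms(2) closure_of_sequentially unfolding X by blast
  with that X show thesis
    by blast
qed

lemma closedin_powertop_real_bounds:
  assumes "k ` J \<subseteq> I"
  shows "closedin (powertop_real I) {g \<in> topspace (powertop_real I). \<forall>j\<in>J. g (k j) \<in> {a..b}}"
proof (cases "J = {}")
  case False
  have "closedin (powertop_real I) {g \<in> topspace (powertop_real I). g (k j) \<in> {a..b}}" if "j \<in> J" for j
    using assms that
    by (intro closedin_continuous_map_preimage[OF continuous_map_product_projection]) auto
  moreover have "{g \<in> topspace (powertop_real I). \<forall>j\<in>J. g (k j) \<in> {a..b}}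
      = (\<Inter>j\<in>J. {g \<in> topspace (powertop_real I). g (k j) \<in> {a..b}})"
    using False by auto
  ultimately show ?thesis
    using False by auto
qed (use closedin_topspace[of "powertop_real I"] in simp)

definition rat_box :: "'i set \<Rightarrow> ('i \<times> rat \<times> rat) set \<Rightarrow> ('i \<Rightarrow> real) set" where
  "rat_box I F = {g \<in> topspace (powertop_real I). \<forall>(i, a, b) \<in> F. g i \<in> {of_rat a<..<of_rat b}}"

lemma rat_box_empty [simp]: "rat_box I {} = topspace (powertop_real I)"
  by (simp add: rat_box_def)

lemma rat_box_insert:
  "rat_box I (insert (i, a, b) F) =
     {g \<in> topspace (powertop_real I). g i \<in> {of_rat a<..<of_rat b}} \<inter> rat_box I F"
  by (auto simp: rat_box_def)

lemma openin_rat_box: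
  assumes "finite F" and "F \<subseteq> I \<times> UNIV"
  shows "openin (powertop_real I) (rat_box I F)"
  using assms
proof (induction F rule: finite_induct)
  case (insert t F)
  obtain i a b where t: "t = (i, a, b)"
    by (cases t) auto
  have "openin (powertop_real I) {g \<in> topspace (powertop_real I). g i \<in> {of_rat a<..<of_rat b}}"
    using insert.prems t
    by (intro openin_continuous_map_preimage[OF continuous_map_product_projection]) auto
  with insert show ?case
    by (simp add: t rat_box_insert openin_Int)
qed (use openin_topspace[of "powertop_real I"] in simp)

lemma countable_rat_box_indices:
  "countable I \<Longrightarrow> countable {F :: ('i \<times> rat \<times> rat) set. finite F \<and> F \<subseteq> I \<times> UNIV}"
  by (intro countable_Collect_finite_subset countable_SIGMA countableI_type)

lemma rat_interval_within_open:
  fixes U :: "real set"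
  assumes "open U" and "x \<in> U"
  obtains a b where "x \<in> {of_rat a<..<of_rat b}" and "{of_rat a<..<of_rat b} \<subseteq> U"
proof -
  obtain e where "e > 0" and e: "ball x e \<subseteq> U"
    using assms open_contains_ball by blast
  obtain a where a: "x - e < of_rat a" "of_rat a < x"
    using of_rat_dense[of "x - e" x] \<open>e > 0\<close> by auto
  obtain b where b: "x < of_rat b" "of_rat b < x + e"
    using of_rat_dense[of x "x + e"] \<open>e > 0\<close> by auto
  have "{of_rat a<..<of_rat b} \<subseteq> ball x e"
    using a b by (auto simp: ball_def dist_real_def)
  with that a b e show thesis
    by auto
qed

lemma rat_box_neighbourhood:
  assumes "openin (powertop_real I) W" and "g \<in> W"
  obtains F where "finite F" "F \<subseteq> I \<times> UNIV" "g \<in> rat_box I F" "rat_box I F \<subseteq> W"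
proof -
  obtain U where fin: "finite {i \<in> I. U i \<noteq> UNIV}" and U_open: "\<forall>i\<in>I. open (U i)"
    and g_U: "g \<in> Pi\<^sub>E I U" and U_W: "Pi\<^sub>E I U \<subseteq> W"
    using assms unfolding openin_product_topology_alt by auto
  define K where "K = {i \<in> I. U i \<noteq> UNIV}"
  have "\<forall>i\<in>K. \<exists>ab. g i \<in> {of_rat (fst ab)<..<of_rat (snd ab)} \<and> {of_rat (fst ab)<..<of_rat (snd ab)} \<subseteq> U i"
  proof
    fix i assume "i \<in> K"
    then have "open (U i)" "g i \<in> U i"
      using U_open g_U by (auto simp: K_def PiE_iff)
    then show "\<exists>ab. g i \<in> {of_rat (fst ab)<..<of_rat (snd ab)} \<and> {of_rat (fst ab)<..<of_rat (snd ab)} \<subseteq> U i"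
      by (metis rat_interval_within_open fst_conv snd_conv)
  qed
  from bchoice[OF this] obtain ab where ab: "\<forall>i\<in>K. g i \<in> {of_rat (fst (ab i))<..<of_rat (snd (ab i))}
      \<and> {of_rat (fst (ab i))<..<of_rat (snd (ab i))} \<subseteq> U i"
    by blast
  define F where "F = (\<lambda>i. (i, ab i)) ` K"
  show thesis
  proof
    show "finite F" "F \<subseteq> I \<times> UNIV"
      using fin by (auto simp: F_def K_def)
    show "g \<in> rat_box I F"
      using g_U ab by (auto simp: rat_box_def F_def PiE_iff case_prod_beta)
    have "rat_box I F \<subseteq> Pi\<^sub>E I U"
    proof
      fix h assume h: "h \<in> rat_box I F"
      have "h i \<in> U i" if "i \<in> I" for i
      proof (cases "i \<in> K")
        case True
        then have "h i \<in> {of_rat (fst (ab i))<..<of_rat (snd (ab i))}"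
          using h by (auto simp: rat_box_def F_def)
        then show ?thesis
          using ab True by blast
      qed (use that in \<open>auto simp: K_def\<close>)
      then show "h \<in> Pi\<^sub>E I U"
        using h by (auto simp: rat_box_def PiE_iff)
    qed
    then show "rat_box I F \<subseteq> W"
      using U_W by blast
  qed
qed

lemma in_closure_of_if_rat_boxes_meet:
  assumes "g \<in> topspace (powertop_real I)"
    and "\<And>F. finite F \<Longrightarrow> F \<subseteq> I \<times> UNIV \<Longrightarrow> g \<in> rat_box I F \<Longrightarrow> rat_box I F \<inter> A \<noteq> {}"
  shows "g \<in> powertop_real I closure_of A"
  unfolding in_closure_of
proof (intro conjI allI impI assms(1))
  fix T assume "g \<in> T \<and> openin (powertop_real I) T"
  then obtain F where "finite F" "F \<subseteq> I \<times> UNIV" "g \<in> rat_box I F" "rat_box I F \<subseteq> T"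
    using rat_box_neighbourhood[of I T g] by blast
  with assms(2) show "\<exists>y. y \<in> A \<and> y \<in> T"
    by blast
qed

lemma fsigma_in_preimage_rat_box:
  assumes f: "f \<in> topspace X \<rightarrow> topspace (powertop_real I)"
    and coord: "\<And>i a b. i \<in> I \<Longrightarrow> fsigma_in X {x \<in> topspace X. f x i \<in> {a<..<b}}"
    and "finite F" and "F \<subseteq> I \<times> UNIV"
  shows "fsigma_in X {x \<in> topspace X. f x \<in> rat_box I F}"
  using assms(3,4)
proof (induction F rule: finite_induct)
  case empty
  show ?case
    using f by (simp add: Pi_iff Collect_conj_eq[symmetric] cong: conj_cong)
next
  case (insert t F)
  obtain i a b where t: "t = (i, a, b)"
    by (cases t) auto
  have "{x \<in> topspace X. f x \<in> rat_box I (insert t F)} =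
      {x \<in> topspace X. f x i \<in> {of_rat a<..<of_rat b}} \<inter> {x \<in> topspace X. f x \<in> rat_box I F}"
    using f by (auto simp: t rat_box_insert)
  with insert coord[of i] show ?case
    by (simp add: t fsigma_in_Int)
qed

lemma baire1_map_powertop_real:
  assumes I: "countable I"
    and f: "f \<in> topspace X \<rightarrow> topspace (powertop_real I)"
    and coord: "\<And>i a b. i \<in> I \<Longrightarrow> fsigma_in X {x \<in> topspace X. f x i \<in> {a<..<b}}"
  shows "baire1_map X (powertop_real I) f"
  unfolding baire1_map_def
proof (intro conjI allI impI f)
  fix W assume W: "openin (powertop_real I) W"
  define \<F> where "\<F> = {F. finite F \<and> F \<subseteq> I \<times> UNIV \<and> rat_box I F \<subseteq> W}"
  have "{x \<in> topspace X. f x \<in> W} = (\<Union>F\<in>\<F>. {x \<in> topspace X. f x \<in> rat_box I F})"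
  proof (intro equalityI subsetI)
    fix x assume x: "x \<in> {x \<in> topspace X. f x \<in> W}"
    then obtain F where "finite F" "F \<subseteq> I \<times> UNIV" "f x \<in> rat_box I F" "rat_box I F \<subseteq> W"
      using rat_box_neighbourhood[OF W] by blast
    with x show "x \<in> (\<Union>F\<in>\<F>. {x \<in> topspace X. f x \<in> rat_box I F})"
      by (auto simp: \<F>_def)
  qed (auto simp: \<F>_def)
  moreover have "countable \<F>"
    using countable_rat_box_indices[OF I] by (rule countable_subset[rotated]) (auto simp: \<F>_def)
  ultimately show "fsigma_in X {x \<in> topspace X. f x \<in> W}"
    using fsigma_in_preimage_rat_box[OF f coord] by (auto simp: \<F>_def intro!: fsigma_in_Union)
qed

section \<open>Translates and the convolution\<close>

lemma ambient_eq_powertop_real: "ambient D = powertop_real (UNIV \<times> D)"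
  by (simp add: ambient_def)

lemma Tsp_subset_topspace: "Tsp d D \<subseteq> topspace (ambient D)"
  by (simp add: Tsp_def closure_of_subset_topspace)

lemma closedin_Tsp: "closedin (ambient D) (Tsp d D)"
  by (simp add: Tsp_def)

lemma defining_seq_tendsto:
  assumes "defining_seq d D x \<sigma>" and "w \<in> D"
  shows "(\<lambda>n. d (real_of_rat q *\<^sub>R x n) w) \<longlonglongrightarrow> \<sigma> (q, w)"
proof -
  have "limitin euclideanreal (\<lambda>n. bar d D (x n) (q, w)) (\<sigma> (q, w)) sequentially"
    using assms unfolding defining_seq_def ambient_def limitin_componentwise by blast
  with assms(2) show ?thesis
    by (simp add: bar_def)
qed

definition shifted :: "'a::real_vector set \<Rightarrow> (rat \<times> 'a \<Rightarrow> real) \<Rightarrow> 'a \<Rightarrow> (rat \<times> 'a \<Rightarrow> real)" where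
  "shifted D \<tau> x = restrict (\<lambda>(q, w). \<tau> (q, w - real_of_rat q *\<^sub>R x)) (UNIV \<times> D)"

definition bounded_shifts ::
    "('a::real_vector \<Rightarrow> 'a \<Rightarrow> real) \<Rightarrow> 'a set \<Rightarrow> (rat \<times> 'a \<Rightarrow> real) set \<Rightarrow> rat \<times> 'a \<Rightarrow> real \<Rightarrow> real
      \<Rightarrow> (rat \<times> 'a \<Rightarrow> real) set" where
  "bounded_shifts d D V k a b =
     {\<tau> \<in> topspace (ambient D). \<forall>v\<in>D. bar d D v \<in> V \<longrightarrow> shifted D \<tau> v k \<in> {a..b}}"

locale stable_convolution =
  fixes d :: "'a::real_normed_vector \<Rightarrow> 'a \<Rightarrow> real" and D :: "'a set"
  assumes pseudometric: "pseudometric d"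
    and translation_invariant: "translation_invariant d"
    and stable: "stable_pm d"
    and rat_linear: "rat_linear_subspace D"
    and countable_D: "countable D"
begin

lemma zero_in_D: "0 \<in> D"
  using rat_linear by (simp add: rat_linear_subspace_def)

lemma add_in_D: "x \<in> D \<Longrightarrow> y \<in> D \<Longrightarrow> x + y \<in> D"
  using rat_linear by (simp add: rat_linear_subspace_def)

lemma diff_scaleR_in_D:
  assumes "w \<in> D" and "x \<in> D"
  shows "w - real_of_rat q *\<^sub>R x \<in> D"
proof -
  have "real_of_rat (- q) *\<^sub>R x \<in> D"
    using rat_linear assms(2) by (simp add: rat_linear_subspace_def)
  then have "- (real_of_rat q *\<^sub>R x) \<in> D"
    by (simp add: of_rat_minus)
  from add_in_D[OF assms(1) this] show ?thesis
    by simp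
qed

lemma d_translate: "d (x + z) (y + z) = d x y"
  using translation_invariant by (simp add: translation_invariant_def)

lemma d_sym: "d x y = d y x"
  using pseudometric by (simp add: pseudometric_def)

lemma d_swap_diff: "d u (z - v) = d v (z - u)"
  using d_translate[of u v "z - v"] d_translate[of v u "z - u"] by (simp add: add.commute)

lemma bar_add:
  assumes "x \<in> D"
  shows "bar d D (x + y) = shifted D (bar d D y) x"
proof
  fix k :: "rat \<times> 'a"
  obtain q w where k: "k = (q, w)"
    by (cases k)
  have "d (real_of_rat q *\<^sub>R x + real_of_rat q *\<^sub>R y) w = d (real_of_rat q *\<^sub>R y) (w - real_of_rat q *\<^sub>R x)"
    using d_translate[of "real_of_rat q *\<^sub>R y" "real_of_rat q *\<^sub>R x" "w - real_of_rat q *\<^sub>R x"]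
    by (simp add: add.commute)
  then show "bar d D (x + y) k = shifted D (bar d D y) x k"
    using diff_scaleR_in_D[OF _ assms, of w q]
    by (auto simp: k bar_def shifted_def scaleR_right_distrib)
qed

lemma continuous_map_shifted:
  assumes "x \<in> D"
  shows "continuous_map (ambient D) (ambient D) (\<lambda>\<tau>. shifted D \<tau> x)"
  unfolding ambient_def continuous_map_componentwise
proof (intro conjI ballI)
  show "(\<lambda>\<tau>. shifted D \<tau> x) ` topspace (powertop_real (UNIV \<times> D)) \<subseteq> extensional (UNIV \<times> D)"
    by (auto simp: shifted_def)
  fix k :: "rat \<times> 'a" assume "k \<in> UNIV \<times> D"
  then obtain q w where k: "k = (q, w)" and "w \<in> D"
    by auto
  then have "continuous_map (powertop_real (UNIV \<times> D)) euclideanreal (\<lambda>\<tau>. \<tau> (q, w - real_of_rat q *\<^sub>R x))"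
    using diff_scaleR_in_D[OF _ assms] by (intro continuous_map_product_projection) auto
  then show "continuous_map (powertop_real (UNIV \<times> D)) euclideanreal (\<lambda>\<tau>. shifted D \<tau> x k)"
    using \<open>w \<in> D\<close> by (simp add: k shifted_def)
qed

lemma shifted_in_Tsp:
  assumes "\<tau> \<in> Tsp d D" and "x \<in> D"
  shows "shifted D \<tau> x \<in> Tsp d D"
proof -
  have "(\<lambda>\<tau>. shifted D \<tau> x) ` bar d D ` D \<subseteq> bar d D ` D"
  proof (rule image_subsetI)
    fix \<rho> assume "\<rho> \<in> bar d D ` D"
    then obtain y where "y \<in> D" and "\<rho> = bar d D y"
      by blast
    moreover have "x + y \<in> D"
      using add_in_D[OF assms(2) \<open>y \<in> D\<close>] .
    ultimately show "shifted D \<rho> x \<in> bar d D ` D"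
      using bar_add[OF assms(2), of y] by (metis image_eqI)
  qed
  then have "ambient D closure_of ((\<lambda>\<tau>. shifted D \<tau> x) ` bar d D ` D) \<subseteq> Tsp d D"
    unfolding Tsp_def by (rule closure_of_mono)
  moreover have "shifted D \<tau> x \<in> ambient D closure_of ((\<lambda>\<tau>. shifted D \<tau> x) ` bar d D ` D)"
    using continuous_map_image_closure_subset[OF continuous_map_shifted[OF assms(2)]] assms(1)
    unfolding Tsp_def by blast
  ultimately show ?thesis
    by blast
qed

lemma limitin_bar_add:
  assumes "x \<in> D" and "defining_seq d D y \<tau>"
  shows "limitin (ambient D) (\<lambda>m. bar d D (x + y m)) (shifted D \<tau> x) sequentially"
proof -
  have "limitin (ambient D) (\<lambda>m. bar d D (y m)) \<tau> sequentially"
    using assms(2) by (simp add: defining_seq_def)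
  from continuous_map_limit[OF continuous_map_shifted[OF assms(1)] this] show ?thesis
    by (simp add: bar_add[OF assms(1)] o_def)
qed

lemma metrizable_space_ambient: "metrizable_space (ambient D)"
  using countable_D by (simp add: ambient_def metrizable_space_powertop_real)

lemma defining_seq_in_closure:
  assumes "\<sigma> \<in> ambient D closure_of (bar d D ` S)" and "S \<subseteq> D"
  obtains x where "defining_seq d D x \<sigma>" and "range x \<subseteq> S"
proof -
  from metrizable_space_closure_of_sequentially[OF metrizable_space_ambient assms(1)]
  obtain s where "range s \<subseteq> bar d D ` S" and lim: "limitin (ambient D) s \<sigma> sequentially" .
  then have "\<forall>n. \<exists>v. v \<in> S \<and> s n = bar d D v"
    by blast
  from choice[OF this] obtain x where x: "\<forall>n. x n \<in> S \<and> s n = bar d D (x n)"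
    by blast
  then have "s = (\<lambda>n. bar d D (x n))"
    by auto
  with lim x assms(2) have "defining_seq d D x \<sigma>"
    unfolding defining_seq_def by auto
  moreover have "range x \<subseteq> S"
    using x by auto
  ultimately show thesis
    by (rule that)
qed

lemma Tsp_defining_seq:
  assumes "\<sigma> \<in> Tsp d D"
  obtains x where "defining_seq d D x \<sigma>"
proof (rule defining_seq_in_closure)
  show "\<sigma> \<in> ambient D closure_of (bar d D ` D)"
    using assms by (simp add: Tsp_def)
qed (use that in auto)

lemma defining_seq_iterated_limits:
  assumes x: "defining_seq d D x \<sigma>" and y: "defining_seq d D y \<tau>" and z: "z \<in> D"
  shows "\<exists>L. (\<lambda>n. \<tau> (q, z - real_of_rat q *\<^sub>R x n)) \<longlonglongrightarrow> L
           \<and> (\<lambda>m. \<sigma> (q, z - real_of_rat q *\<^sub>R y m)) \<longlonglongrightarrow> L"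
proof -
  define X where "X n = real_of_rat q *\<^sub>R x n" for n
  define Y where "Y m = z - real_of_rat q *\<^sub>R y m" for m
  have xD: "x n \<in> D" and yD: "y n \<in> D" for n
    using x y by (auto simp: defining_seq_def)
  have rows: "(\<lambda>m. d (X n) (Y m)) \<longlonglongrightarrow> \<tau> (q, z - real_of_rat q *\<^sub>R x n)" for n
    unfolding X_def Y_def d_swap_diff[of "real_of_rat q *\<^sub>R x n"]
    by (rule defining_seq_tendsto[OF y diff_scaleR_in_D[OF z xD]])
  have cols: "(\<lambda>n. d (X n) (Y m)) \<longlonglongrightarrow> \<sigma> (q, Y m)" for m
    unfolding X_def Y_def by (rule defining_seq_tendsto[OF x diff_scaleR_in_D[OF z yD]])
  obtain K1 where K1: "\<And>n. d (X n) 0 \<le> K1"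
    using LIMSEQ_bounded_above[OF defining_seq_tendsto[OF x zero_in_D]] unfolding X_def by blast
  obtain K2 where K2: "\<And>m. d (real_of_rat q *\<^sub>R y m) 0 \<le> K2"
    using LIMSEQ_bounded_above[OF defining_seq_tendsto[OF y zero_in_D]] by blast
  have Y_bound: "d (Y m) 0 \<le> d z 0 + K2" for m
  proof -
    have "d (Y m) 0 = d (real_of_rat q *\<^sub>R y m) z"
      using d_sym[of "Y m" 0] d_swap_diff[of 0 z "real_of_rat q *\<^sub>R y m"] by (simp add: Y_def)
    also have "\<dots> \<le> d (real_of_rat q *\<^sub>R y m) 0 + d z 0"
      using pseudometric_le_origin(1)[OF pseudometric] .
    finally show ?thesis
      using K2[of m] by simp
  qed
  have "d (X n) 0 \<le> max K1 (d z 0 + K2)" "d (Y n) 0 \<le> max K1 (d z 0 + K2)" for n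
    using K1 Y_bound by (simp_all add: le_max_iff_disj)
  from stable_iterated_limits[OF pseudometric stable this rows cols] show ?thesis
    by (simp add: Y_def)
qed

lemma shifted_along_defining_seqs_converge:
  assumes "\<tau> \<in> Tsp d D"
  shows "\<exists>\<rho>. \<forall>x. defining_seq d D x \<sigma> \<longrightarrow>
      limitin (ambient D) (\<lambda>n. shifted D \<tau> (x n)) \<rho> sequentially"
proof -
  obtain y where y: "defining_seq d D y \<tau>"
    using Tsp_defining_seq[OF assms] .
  define \<rho> where "\<rho> = restrict (\<lambda>(q, w). lim (\<lambda>m. \<sigma> (q, w - real_of_rat q *\<^sub>R y m))) (UNIV \<times> D)"
  have "limitin (ambient D) (\<lambda>n. shifted D \<tau> (x n)) \<rho> sequentially"
    if x: "defining_seq d D x \<sigma>" for x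
    unfolding ambient_def limitin_componentwise
  proof (intro conjI ballI)
    show "\<rho> \<in> extensional (UNIV \<times> D)"
      by (simp add: \<rho>_def)
    show "\<forall>\<^sub>F n in sequentially. shifted D \<tau> (x n) \<in> topspace (powertop_real (UNIV \<times> D))"
      by (simp add: shifted_def)
    fix k :: "rat \<times> 'a" assume "k \<in> UNIV \<times> D"
    then obtain q w where k: "k = (q, w)" and w: "w \<in> D"
      by auto
    obtain L where "(\<lambda>n. \<tau> (q, w - real_of_rat q *\<^sub>R x n)) \<longlonglongrightarrow> L"
      and "(\<lambda>m. \<sigma> (q, w - real_of_rat q *\<^sub>R y m)) \<longlonglongrightarrow> L"
      using defining_seq_iterated_limits[OF x y w] by blast
    then show "limitin euclideanreal (\<lambda>n. shifted D \<tau> (x n) k) (\<rho> k) sequentially"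
      using w by (simp add: k shifted_def \<rho>_def limI)
  qed
  then show ?thesis
    by blast
qed

lemma conv_limitin:
  assumes \<sigma>: "\<sigma> \<in> Tsp d D" and \<tau>: "\<tau> \<in> Tsp d D" and x: "defining_seq d D x \<sigma>"
  shows "limitin (ambient D) (\<lambda>n. shifted D \<tau> (x n)) (conv d D \<sigma> \<tau>) sequentially"
proof -
  obtain \<rho> where \<rho>: "\<And>x. defining_seq d D x \<sigma> \<Longrightarrow>
      limitin (ambient D) (\<lambda>n. shifted D \<tau> (x n)) \<rho> sequentially"
    using shifted_along_defining_seqs_converge[OF \<tau>] by blast
  have Hausdorff: "Hausdorff_space (ambient D)"
    by (simp add: ambient_def Hausdorff_space_product_topology)
  have "conv d D \<sigma> \<tau> = \<rho>"
    unfolding conv_def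
  proof (rule the_equality)
    show "\<forall>x y. defining_seq d D x \<sigma> \<and> defining_seq d D y \<tau> \<longrightarrow>
      (\<exists>g. (\<forall>n. limitin (ambient D) (\<lambda>m. bar d D (x n + y m)) (g n) sequentially)
           \<and> limitin (ambient D) g \<rho> sequentially)"
    proof (intro allI impI)
      fix x y assume xy: "defining_seq d D x \<sigma> \<and> defining_seq d D y \<tau>"
      then have "limitin (ambient D) (\<lambda>m. bar d D (x n + y m)) (shifted D \<tau> (x n)) sequentially" for n
        using limitin_bar_add by (simp add: defining_seq_def)
      moreover have "limitin (ambient D) (\<lambda>n. shifted D \<tau> (x n)) \<rho> sequentially"
        using \<rho> xy by blast
      ultimately show "\<exists>g. (\<forall>n. limitin (ambient D) (\<lambda>m. bar d D (x n + y m)) (g n) sequentially)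
           \<and> limitin (ambient D) g \<rho> sequentially"
        by (intro exI[of _ "\<lambda>n. shifted D \<tau> (x n)"]) blast
    qed
  next
    fix \<rho>' assume \<rho>': "\<forall>x y. defining_seq d D x \<sigma> \<and> defining_seq d D y \<tau> \<longrightarrow>
      (\<exists>g. (\<forall>n. limitin (ambient D) (\<lambda>m. bar d D (x n + y m)) (g n) sequentially)
           \<and> limitin (ambient D) g \<rho>' sequentially)"
    obtain x0 y0 where x0: "defining_seq d D x0 \<sigma>" and y0: "defining_seq d D y0 \<tau>"
      using Tsp_defining_seq \<sigma> \<tau> by metis
    with \<rho>' obtain g where g: "\<And>n. limitin (ambient D) (\<lambda>m. bar d D (x0 n + y0 m)) (g n) sequentially"
      and g_lim: "limitin (ambient D) g \<rho>' sequentially"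
      by blast
    have "g = (\<lambda>n. shifted D \<tau> (x0 n))"
    proof
      fix n
      show "g n = shifted D \<tau> (x0 n)"
        using x0 limitin_Hausdorff_unique[OF g limitin_bar_add[OF _ y0] trivial_limit_sequentially Hausdorff]
        by (simp add: defining_seq_def)
    qed
    with g_lim show "\<rho>' = \<rho>"
      using limitin_Hausdorff_unique[OF _ \<rho>[OF x0] trivial_limit_sequentially Hausdorff] by simp
  qed
  with \<rho>[OF x] show ?thesis
    by simp
qed

lemma conv_in_Tsp:
  assumes \<sigma>: "\<sigma> \<in> Tsp d D" and \<tau>: "\<tau> \<in> Tsp d D"
  shows "conv d D \<sigma> \<tau> \<in> Tsp d D"
proof -
  obtain x where x: "defining_seq d D x \<sigma>"
    using Tsp_defining_seq[OF \<sigma>] .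
  have "shifted D \<tau> (x n) \<in> Tsp d D" for n
    using x shifted_in_Tsp[OF \<tau>] by (simp add: defining_seq_def)
  then show ?thesis
    using limitin_closedin[OF conv_limitin[OF \<sigma> \<tau> x] closedin_Tsp] by simp
qed

lemma conv_coordinate_tendsto:
  assumes \<sigma>: "\<sigma> \<in> Tsp d D" and \<tau>: "\<tau> \<in> Tsp d D" and x: "defining_seq d D x \<sigma>" and w: "w \<in> D"
  shows "(\<lambda>n. \<tau> (q, w - real_of_rat q *\<^sub>R x n)) \<longlonglongrightarrow> conv d D \<sigma> \<tau> (q, w)"
  using conv_limitin[OF assms(1-3)] w
  unfolding ambient_def limitin_componentwise by (auto simp: shifted_def)

section \<open>The convolution is of Baire class 1\<close>

lemma closedin_bounded_shifts:
  assumes "w \<in> D"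
  shows "closedin (ambient D) (bounded_shifts d D V (q, w) a b)"
proof -
  have eq: "bounded_shifts d D V (q, w) a b =
      {\<tau> \<in> topspace (powertop_real (UNIV \<times> D)).
         \<forall>v\<in>{v \<in> D. bar d D v \<in> V}. \<tau> ((\<lambda>v. (q, w - real_of_rat q *\<^sub>R v)) v) \<in> {a..b}}"
    using assms by (auto simp: bounded_shifts_def shifted_def ambient_def)
  show ?thesis
    unfolding ambient_def eq
    by (rule closedin_powertop_real_bounds) (use diff_scaleR_in_D[OF assms] in auto)
qed

lemma conv_coordinate_in_bounds:
  assumes \<sigma>: "\<sigma> \<in> Tsp d D" and \<tau>: "\<tau> \<in> Tsp d D" and w: "w \<in> D"
    and V: "openin (ambient D) V" "\<sigma> \<in> V" and \<tau>_bounded: "\<tau> \<in> bounded_shifts d D V (q, w) a b"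
  shows "conv d D \<sigma> \<tau> (q, w) \<in> {a..b}"
proof -
  obtain x where x: "defining_seq d D x \<sigma>"
    using Tsp_defining_seq[OF \<sigma>] .
  then have "\<forall>\<^sub>F n in sequentially. bar d D (x n) \<in> V"
    using V unfolding defining_seq_def limitin_def by blast
  then have "\<forall>\<^sub>F n in sequentially. \<tau> (q, w - real_of_rat q *\<^sub>R x n) \<in> {a..b}"
    using \<tau>_bounded x w by (auto simp: bounded_shifts_def shifted_def defining_seq_def elim: eventually_mono)
  then show ?thesis
    using Lim_in_closed_set[OF closed_atLeastAtMost _ _ conv_coordinate_tendsto[OF \<sigma> \<tau> x w]] by simp
qed

lemma conv_coordinate_bounded_shifts:
  assumes \<sigma>: "\<sigma> \<in> Tsp d D" and \<tau>: "\<tau> \<in> Tsp d D" and w: "w \<in> D"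
    and conv: "conv d D \<sigma> \<tau> (q, w) \<in> {a<..<b}"
  shows "\<exists>F. finite F \<and> F \<subseteq> (UNIV \<times> D) \<times> UNIV \<and> \<sigma> \<in> rat_box (UNIV \<times> D) F
           \<and> \<tau> \<in> bounded_shifts d D (rat_box (UNIV \<times> D) F) (q, w) a b"
proof (rule ccontr)
  assume none: "\<not> ?thesis"
  define S where "S = {v \<in> D. \<tau> (q, w - real_of_rat q *\<^sub>R v) \<notin> {a..b}}"
  have "\<sigma> \<in> ambient D closure_of (bar d D ` S)"
    unfolding ambient_def
  proof (rule in_closure_of_if_rat_boxes_meet)
    show "\<sigma> \<in> topspace (powertop_real (UNIV \<times> D))"
      using \<sigma> Tsp_subset_topspace[of d D] unfolding ambient_def by blast
    fix F assume F: "finite F" "F \<subseteq> (UNIV \<times> D) \<times> UNIV" "\<sigma> \<in> rat_box (UNIV \<times> D) F"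
    then have "\<tau> \<notin> bounded_shifts d D (rat_box (UNIV \<times> D) F) (q, w) a b"
      using none by blast
    then obtain v where v: "v \<in> D" "bar d D v \<in> rat_box (UNIV \<times> D) F"
      and "shifted D \<tau> v (q, w) \<notin> {a..b}"
      using \<tau> Tsp_subset_topspace unfolding bounded_shifts_def by blast
    then have "v \<in> S"
      using w by (simp add: S_def shifted_def)
    with v show "rat_box (UNIV \<times> D) F \<inter> bar d D ` S \<noteq> {}"
      by blast
  qed
  moreover have "S \<subseteq> D"
    by (auto simp: S_def)
  ultimately obtain x where x: "defining_seq d D x \<sigma>" and "range x \<subseteq> S"
    by (rule defining_seq_in_closure)
  have outside: "\<tau> (q, w - real_of_rat q *\<^sub>R x n) \<notin> {a<..<b}" for n
  proof -
    have "x n \<in> S"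
      using \<open>range x \<subseteq> S\<close> by blast
    then show ?thesis
      by (auto simp: S_def)
  qed
  have "\<forall>\<^sub>F n in sequentially. \<tau> (q, w - real_of_rat q *\<^sub>R x n) \<in> {a<..<b}"
    using topological_tendstoD[OF conv_coordinate_tendsto[OF \<sigma> \<tau> x w] open_greaterThanLessThan conv] .
  then obtain n where "\<tau> (q, w - real_of_rat q *\<^sub>R x n) \<in> {a<..<b}"
    using eventually_sequentially by auto
  with outside show False
    by blast
qed

lemma conv_coordinate_preimage_eq:
  assumes w: "w \<in> D"
  shows "{p \<in> Tsp d D \<times> Tsp d D. conv d D (fst p) (snd p) (q, w) \<in> {c0<..<c1}} =
    (\<Union>(F, a, b) \<in> {F. finite F \<and> F \<subseteq> (UNIV \<times> D) \<times> UNIV} \<times> {(a, b). c0 < of_rat a \<and> of_rat b < c1}.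
       (rat_box (UNIV \<times> D) F \<times> bounded_shifts d D (rat_box (UNIV \<times> D) F) (q, w) (of_rat a) (of_rat b))
       \<inter> (Tsp d D \<times> Tsp d D))"
  (is "?lhs = (\<Union>(F, a, b) \<in> ?idx. ?piece F a b)")
proof (intro equalityI subsetI)
  fix p assume "p \<in> ?lhs"
  then obtain \<sigma> \<tau> where p: "p = (\<sigma>, \<tau>)" and \<sigma>: "\<sigma> \<in> Tsp d D" and \<tau>: "\<tau> \<in> Tsp d D"
    and c: "c0 < conv d D \<sigma> \<tau> (q, w)" "conv d D \<sigma> \<tau> (q, w) < c1"
    by (cases p) auto
  obtain a where a: "c0 < of_rat a" "of_rat a < conv d D \<sigma> \<tau> (q, w)"
    using of_rat_dense[OF c(1)] by blast
  obtain b where b: "conv d D \<sigma> \<tau> (q, w) < of_rat b" "of_rat b < c1"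
    using of_rat_dense[OF c(2)] by blast
  have "conv d D \<sigma> \<tau> (q, w) \<in> {of_rat a<..<of_rat b}"
    using a(2) b(1) by simp
  from conv_coordinate_bounded_shifts[OF \<sigma> \<tau> w this]
  obtain F where "finite F" "F \<subseteq> (UNIV \<times> D) \<times> UNIV" "\<sigma> \<in> rat_box (UNIV \<times> D) F"
    "\<tau> \<in> bounded_shifts d D (rat_box (UNIV \<times> D) F) (q, w) (of_rat a) (of_rat b)"
    by blast
  with a(1) b(2) \<sigma> \<tau> have "(F, a, b) \<in> ?idx" and "p \<in> ?piece F a b"
    by (simp_all add: p)
  then show "p \<in> (\<Union>(F, a, b) \<in> ?idx. ?piece F a b)"
    by blast
next
  fix p assume "p \<in> (\<Union>(F, a, b) \<in> ?idx. ?piece F a b)"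
  then obtain F a b \<sigma> \<tau> where "(F, a, b) \<in> ?idx" and p: "p = (\<sigma>, \<tau>)" and "p \<in> ?piece F a b"
    by auto
  then have F: "finite F" "F \<subseteq> (UNIV \<times> D) \<times> UNIV" and ab: "c0 < of_rat a" "of_rat b < c1"
    and \<sigma>: "\<sigma> \<in> Tsp d D" "\<sigma> \<in> rat_box (UNIV \<times> D) F"
    and \<tau>: "\<tau> \<in> Tsp d D" "\<tau> \<in> bounded_shifts d D (rat_box (UNIV \<times> D) F) (q, w) (of_rat a) (of_rat b)"
    by simp_all
  have "openin (ambient D) (rat_box (UNIV \<times> D) F)"
    using openin_rat_box[OF F] by (simp add: ambient_def)
  from conv_coordinate_in_bounds[OF \<sigma>(1) \<tau>(1) w this \<sigma>(2) \<tau>(2)] ab \<sigma>(1) \<tau>(1)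
  show "p \<in> ?lhs"
    by (simp add: p)
qed

lemma fsigma_in_rat_box_Times_bounded_shifts:
  assumes "finite F" and "F \<subseteq> (UNIV \<times> D) \<times> UNIV" and "w \<in> D"
  shows "fsigma_in (prod_topology (ambient D) (ambient D))
    (rat_box (UNIV \<times> D) F \<times> bounded_shifts d D (rat_box (UNIV \<times> D) F) (q, w) a b)"
proof -
  have "fsigma_in (ambient D) (rat_box (UNIV \<times> D) F)"
    using open_imp_fsigma_in[OF metrizable_space_ambient] openin_rat_box[OF assms(1,2)]
    by (simp add: ambient_def)
  from fsigma_in_Times_closedin[OF this closedin_bounded_shifts[OF assms(3)]] show ?thesis .
qed

lemma fsigma_in_conv_coordinate_preimage:
  assumes w: "w \<in> D"
  defines "X \<equiv> subtopology (prod_topology (ambient D) (ambient D)) (Tsp d D \<times> Tsp d D)"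
  shows "fsigma_in X {p \<in> topspace X. (\<lambda>(\<sigma>, \<tau>). conv d D \<sigma> \<tau>) p (q, w) \<in> {c0<..<c1}}"
proof -
  let ?idx = "{F :: ((rat \<times> 'a) \<times> rat \<times> rat) set. finite F \<and> F \<subseteq> (UNIV \<times> D) \<times> UNIV} \<times> {(a, b). c0 < of_rat a \<and> of_rat b < c1}"
  have "topspace X = Tsp d D \<times> Tsp d D"
    using Tsp_subset_topspace by (auto simp: X_def)
  then have "{p \<in> topspace X. (\<lambda>(\<sigma>, \<tau>). conv d D \<sigma> \<tau>) p (q, w) \<in> {c0<..<c1}} =
      {p \<in> Tsp d D \<times> Tsp d D. conv d D (fst p) (snd p) (q, w) \<in> {c0<..<c1}}"
    by (auto simp: case_prod_beta)
  moreover have "countable ?idx"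
    by (intro countable_SIGMA countable_rat_box_indices countableI_type countable_D)
  moreover have "fsigma_in X ((rat_box (UNIV \<times> D) F \<times>
        bounded_shifts d D (rat_box (UNIV \<times> D) F) (q, w) (of_rat a) (of_rat b)) \<inter> (Tsp d D \<times> Tsp d D))"
    if "(F, a, b) \<in> ?idx" for F a b
    using fsigma_in_rat_box_Times_bounded_shifts[of F w] that w
    unfolding X_def fsigma_in_subtopology by blast
  ultimately show ?thesis
    unfolding conv_coordinate_preimage_eq[OF w] by (auto intro!: fsigma_in_Union)
qed

theorem baire1_map_conv:
  "baire1_map (subtopology (prod_topology (ambient D) (ambient D)) (Tsp d D \<times> Tsp d D))
     (subtopology (ambient D) (Tsp d D)) (\<lambda>(\<sigma>, \<tau>). conv d D \<sigma> \<tau>)"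
proof (rule baire1_map_into_subtopology)
  let ?X = "subtopology (prod_topology (ambient D) (ambient D)) (Tsp d D \<times> Tsp d D)"
  have into_Tsp: "(\<lambda>(\<sigma>, \<tau>). conv d D \<sigma> \<tau>) \<in> topspace ?X \<rightarrow> Tsp d D"
    using conv_in_Tsp by auto
  have "baire1_map ?X (powertop_real (UNIV \<times> D)) (\<lambda>(\<sigma>, \<tau>). conv d D \<sigma> \<tau>)"
  proof (rule baire1_map_powertop_real)
    show "countable (UNIV \<times> D :: (rat \<times> 'a) set)"
      using countable_D by simp
    have "Tsp d D \<subseteq> topspace (powertop_real (UNIV \<times> D))"
      using Tsp_subset_topspace by (simp add: ambient_def)
    with into_Tsp show "(\<lambda>(\<sigma>, \<tau>). conv d D \<sigma> \<tau>) \<in> topspace ?X \<rightarrow> topspace (powertop_real (UNIV \<times> D))"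
      using Pi_mono[of "topspace ?X" "\<lambda>_. Tsp d D"] by blast
    fix i :: "rat \<times> 'a" and a b :: real
    assume "i \<in> UNIV \<times> D"
    then obtain q w where "i = (q, w)" and "w \<in> D"
      by auto
    then show "fsigma_in ?X {p \<in> topspace ?X. (\<lambda>(\<sigma>, \<tau>). conv d D \<sigma> \<tau>) p i \<in> {a<..<b}}"
      using fsigma_in_conv_coordinate_preimage[of w q a b] by simp
  qed
  then show "baire1_map ?X (ambient D) (\<lambda>(\<sigma>, \<tau>). conv d D \<sigma> \<tau>)"
    by (simp only: ambient_eq_powertop_real[symmetric])
  show "(\<lambda>(\<sigma>, \<tau>). conv d D \<sigma> \<tau>) \<in> topspace ?X \<rightarrow> Tsp d D"
    by (fact into_Tsp)
qed

end

theorem corollary4p6: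
  fixes d :: "'a::banach \<Rightarrow> 'a \<Rightarrow> real" and D :: "'a set"
  assumes "separable_space TYPE('a)"
    and "infinite_dimensional TYPE('a)"
    and "pseudometric d" and "translation_invariant d" and "stable_pm d"
    and "id_coarse_equiv d"
    and "countable D" and "closure D = UNIV" and "rat_linear_subspace D"
  shows "baire1_map
           (subtopology (prod_topology (ambient D) (ambient D)) (Tsp d D \<times> Tsp d D))
           (subtopology (ambient D) (Tsp d D))
           (\<lambda>(\<sigma>, \<tau>). conv d D \<sigma> \<tau>)"
proof -
  interpret stable_convolution d D
    using assms by unfold_locales
  show ?thesis
    by (rule baire1_map_conv)
qed

end
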